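(* For $n\ge 1$, let $\Delta_n$ be the $n$-dimensional simplex and $C^*_n$ the $n$-dimensional cross-polytope. Then $$\Theta(\Psi(\Delta_n))=[n+1]!\qquad\text{and}\qquad \Theta(\Psi(C^*_n))=[2]^n\cdot[n]!.$$
   Context: For a polytope $V$, $\Psi(V)$ denotes the $\mathbf{a}\mathbf{b}$-index of its face lattice (all faces, including the empty face and $V$ itself, ordered by inclusion; a graded poset of rank $\dim V+1$). The $\mathbf{a}\mathbf{b}$-index of a graded poset $P$ of rank $n+1$ with minimum $\hat 0$, maximum $\hat 1$ and rank function $\rho$ is $\Psi(P)=\sum_{S\subseteq\{1,\dots,n\}} f_S\, v_S$, where for $S=\{s_1<\cdots<s_k\}$, $f_S$ is the number of chains $\hat0<x_1<\cdots<x_k<\hat1$ with $\rho(x_i)=s_i$, and $v_S=v_1\cdots v_n$ with $v_i=\mathbf{b}$ if $i\in S$ and $v_i=\mathbf{a}-\mathbf{b}$ if $i\notin S$; here $\mathbf{a},\mathbf{b}$ are non-commuting variables. The Major MacMahon map $\Theta:\mathbb{Z}\langle\mathbf{a},\mathbf{b}\rangle\to\mathbb{Z}[q]$ is the linear map with $\Theta(u_1\cdots u_n)=\prod_{i:\,u_i=\mathbf{b}}q^i$ on monomials. $[m]=1+q+\cdots+q^{m-1}$ and $[m]!=[m][m-1]\cdots[1]$. *)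

theory Defs
  imports "HOL-Analysis.Analysis" "HOL-Computational_Algebra.Polynomial"
begin

text \<open>An element of Z<a,b> is represented by its coefficient function on words.
  A word is a bool list; False stands for the letter a, True for the letter b.\<close>

type_synonym ncpoly = "bool list \<Rightarrow> int"

definition nc_one :: ncpoly where
  "nc_one = (\<lambda>w. if w = [] then 1 else 0)"

definition nc_a :: ncpoly where
  "nc_a = (\<lambda>w. if w = [False] then 1 else 0)"

definition nc_b :: ncpoly where
  "nc_b = (\<lambda>w. if w = [True] then 1 else 0)"

definition nc_add :: "ncpoly \<Rightarrow> ncpoly \<Rightarrow> ncpoly" where
  "nc_add p r = (\<lambda>w. p w + r w)"

definition nc_sub :: "ncpoly \<Rightarrow> ncpoly \<Rightarrow> ncpoly" where
  "nc_sub p r = (\<lambda>w. p w - r w)"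

definition nc_smult :: "int \<Rightarrow> ncpoly \<Rightarrow> ncpoly" where
  "nc_smult c p = (\<lambda>w. c * p w)"

definition nc_mul :: "ncpoly \<Rightarrow> ncpoly \<Rightarrow> ncpoly" where
  "nc_mul p r = (\<lambda>w. \<Sum>k\<le>length w. p (take k w) * r (drop k w))"

definition flag_count :: "'a set set \<Rightarrow> ('a set \<Rightarrow> nat) \<Rightarrow> nat set \<Rightarrow> nat" where
  "flag_count P \<rho> S = card {xs. length xs = card S \<and>
      (\<forall>i<length xs. xs ! i \<in> P \<and> \<rho> (xs ! i) = sorted_list_of_set S ! i) \<and>
      (\<forall>i. Suc i < length xs \<longrightarrow> xs ! i \<subset> xs ! Suc i)}"

definition v_mono :: "nat \<Rightarrow> nat set \<Rightarrow> ncpoly" where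
  "v_mono n S = foldr nc_mul
     (map (\<lambda>i. if i \<in> S then nc_b else nc_sub nc_a nc_b) [1..<Suc n]) nc_one"

text \<open>ab-index of a graded poset P of rank n+1 with rank function rho.\<close>
definition ab_index :: "nat \<Rightarrow> 'a set set \<Rightarrow> ('a set \<Rightarrow> nat) \<Rightarrow> ncpoly" where
  "ab_index n P \<rho> = (\<lambda>w. \<Sum>S\<in>Pow {1..n}. int (flag_count P \<rho> S) * v_mono n S w)"

definition Theta :: "ncpoly \<Rightarrow> int poly" where
  "Theta p = (\<Sum>w\<in>{w. p w \<noteq> 0}.
      smult (p w) (monom 1 (\<Sum>i<length w. if w ! i then Suc i else 0)))"

definition qint :: "nat \<Rightarrow> int poly" where
  "qint m = (\<Sum>i<m. monom 1 i)"

definition qfact :: "nat \<Rightarrow> int poly" where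
  "qfact m = (\<Prod>i\<in>{1..m}. qint i)"

text \<open>Face lattice: all faces (including the empty face and V itself), ordered by
  inclusion; rank of a face F is dim F + 1.\<close>
definition face_lattice :: "'a::euclidean_space set \<Rightarrow> 'a set set" where
  "face_lattice V = {F. F face_of V}"

definition face_rank :: "'a::euclidean_space set \<Rightarrow> nat" where
  "face_rank F = nat (aff_dim F + 1)"

definition Psi :: "'a::euclidean_space set \<Rightarrow> ncpoly" where
  "Psi V = ab_index (nat (aff_dim V)) (face_lattice V) face_rank"

text \<open>The n-simplex in R^n (n = CARD('n)): convex hull of 0 and the unit vectors.\<close>
definition simplex_poly :: "(real ^ 'n) set" where
  "simplex_poly = convex hull (insert 0 (range (\<lambda>i. axis i 1)))"

definition cross_polytope :: "(real ^ 'n) set" where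
  "cross_polytope = convex hull (range (\<lambda>i. axis i 1) \<union> range (\<lambda>i. axis i (-1)))"

end

theory Submission
  imports Defs
begin

text \<open>Under \<open>\<Theta>\<close> the monomial \<open>v\<^sub>S\<close> becomes
  \<open>\<Prod>\<^sub>i\<^sub>\<in>\<^sub>S q\<^sup>i \<Prod>\<^sub>i\<^sub>\<notin>\<^sub>S (1 - q\<^sup>i)\<close>, so \<open>\<Theta>(\<Psi>(P))\<close> is a weighted sum of flag numbers.
  The faces of the simplex are the convex hulls of the subsets of its \<open>n + 1\<close> affinely
  independent vertices, and the proper faces of the cross-polytope are the convex hulls of the
  antipodal-free sets of vertices. So in both cases the face lattice, below its top, is a
  family of finite sets closed under subsets and graded by cardinality. Sorting flags by their
  top element expresses \<open>\<Theta>\<close> of such a family through \<open>\<Theta>\<close> of the Boolean lattices below its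
  members, which by induction are q-factorials. The result is
  \<open>\<Sum>\<^sub>j N\<^sub>j [j]! q\<^sup>j (1 - q\<^sup>j\<^sup>+\<^sup>1)\<cdots>(1 - q\<^sup>n)\<close> with \<open>N\<^sub>j\<close> the number of members of size \<open>j\<close>;
  after multiplication by \<open>(1 - q)\<^sup>n\<close> it is a binomial expansion, which for
  \<open>N\<^sub>j = (n choose j) x\<^sup>j\<close> sums to \<open>(1 + (x - 1) q)\<^sup>n [n]!\<close>.\<close>

section \<open>Chains of a graded family of sets\<close>

definition chains :: "'a set set \<Rightarrow> ('a set \<Rightarrow> nat) \<Rightarrow> nat set \<Rightarrow> 'a set list set" where
  "chains P \<rho> S = {xs. length xs = card S \<and>
      (\<forall>i<length xs. xs ! i \<in> P \<and> \<rho> (xs ! i) = sorted_list_of_set S ! i) \<and>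
      (\<forall>i. Suc i < length xs \<longrightarrow> xs ! i \<subset> xs ! Suc i)}"

lemma flag_count_eq_card_chains: "flag_count P \<rho> S = card (chains P \<rho> S)"
  unfolding flag_count_def chains_def ..

lemma finite_chains: "finite P \<Longrightarrow> finite (chains P \<rho> S)"
  by (rule finite_subset[OF _ finite_lists_length_eq[of P "card S"]])
     (auto simp: chains_def in_set_conv_nth)

lemma flag_count_empty: "flag_count P \<rho> {} = 1"
proof -
  have "chains P \<rho> {} = {[]}" by (auto simp: chains_def)
  then show ?thesis by (simp add: flag_count_eq_card_chains)
qed

lemma flag_count_restrict_ranks:
  assumes "finite S"
  shows "flag_count P \<rho> S = flag_count {p\<in>P. \<rho> p \<in> S} \<rho> S"
proof -
  have "sorted_list_of_set S ! i \<in> S" if "i < card S" for i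
    using assms that by (metis length_sorted_list_of_set nth_mem set_sorted_list_of_set)
  then have "chains P \<rho> S = chains {p\<in>P. \<rho> p \<in> S} \<rho> S"
    unfolding chains_def by (auto simp del: sorted_list_of_set.length_sorted_key_list_of_set)
  then show ?thesis by (simp add: flag_count_eq_card_chains)
qed

lemma map_in_chains:
  assumes mono: "\<And>c d. c \<in> Q \<Longrightarrow> d \<in> Q \<Longrightarrow> f c \<subseteq> f d \<longleftrightarrow> c \<subseteq> d"
    and rank: "\<And>x. x \<in> Q \<Longrightarrow> \<rho> (f x) = \<rho>' x"
    and xs: "xs \<in> chains Q \<rho>' S"
  shows "map f xs \<in> chains (f ` Q) \<rho> S"
  unfolding chains_def
proof (intro CollectI conjI allI impI)
  have xs_Q: "xs ! i \<in> Q" if "i < length xs" for i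
    using xs that by (simp add: chains_def)
  show "length (map f xs) = card S"
    using xs by (simp add: chains_def)
  show "map f xs ! i \<in> f ` Q" "\<rho> (map f xs ! i) = sorted_list_of_set S ! i"
    if "i < length (map f xs)" for i
    using that xs xs_Q[of i] rank[of "xs ! i"] by (auto simp: chains_def)
  show "map f xs ! i \<subset> map f xs ! Suc i" if "Suc i < length (map f xs)" for i
    using that xs mono[OF xs_Q xs_Q, of i "Suc i"] mono[OF xs_Q xs_Q, of "Suc i" i]
    by (auto simp: chains_def)
qed

lemma chains_image_order_embedding:
  assumes mono: "\<And>c d. c \<in> Q \<Longrightarrow> d \<in> Q \<Longrightarrow> f c \<subseteq> f d \<longleftrightarrow> c \<subseteq> d"
    and rank: "\<And>x. x \<in> Q \<Longrightarrow> \<rho> (f x) = \<rho>' x"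
  shows "chains (f ` Q) \<rho> S = map f ` chains Q \<rho>' S"
proof (intro subset_antisym subsetI)
  fix ys assume ys: "ys \<in> chains (f ` Q) \<rho> S"
  let ?g = "inv_into Q f"
  have "inj_on f Q"
    by (rule inj_onI) (metis mono subset_antisym order_refl)
  then have "?g ` f ` Q = Q"
    by (simp add: image_comp)
  moreover have "map ?g ys \<in> chains (?g ` f ` Q) \<rho>' S"
  proof (rule map_in_chains[OF _ _ ys])
    show "?g c \<subseteq> ?g d \<longleftrightarrow> c \<subseteq> d" if "c \<in> f ` Q" "d \<in> f ` Q" for c d
      using that mono[of "?g c" "?g d"] by (auto simp: f_inv_into_f inv_into_into)
    show "\<rho>' (?g y) = \<rho> y" if "y \<in> f ` Q" for y
      using that rank[of "?g y"] by (simp add: f_inv_into_f inv_into_into)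
  qed
  moreover have "map f (map ?g ys) = ys"
    using ys by (intro nth_equalityI) (auto simp: chains_def f_inv_into_f)
  ultimately show "ys \<in> map f ` chains Q \<rho>' S"
    by (metis image_eqI)
next
  fix ys assume "ys \<in> map f ` chains Q \<rho>' S"
  then show "ys \<in> chains (f ` Q) \<rho> S"
    using map_in_chains[where f = f and Q = Q and \<rho> = \<rho> and \<rho>' = \<rho>', OF mono rank] by blast
qed

lemma ab_index_order_embedding:
  assumes mono: "\<And>c d. c \<in> Q \<Longrightarrow> d \<in> Q \<Longrightarrow> f c \<subseteq> f d \<longleftrightarrow> c \<subseteq> d"
    and rank: "\<And>x. x \<in> Q \<Longrightarrow> \<rho> (f x) = \<rho>' x"
    and into: "f ` Q \<subseteq> P"
    and onto: "\<And>y. y \<in> P \<Longrightarrow> \<rho> y \<in> {1..n} \<Longrightarrow> y \<in> f ` Q"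
  shows "ab_index n P \<rho> = ab_index n Q \<rho>'"
proof -
  have "flag_count P \<rho> S = flag_count Q \<rho>' S" if S: "S \<subseteq> {1..n}" for S
  proof -
    have "finite S" using S finite_subset by blast
    have "inj_on f Q"
      by (rule inj_onI) (metis mono subset_antisym order_refl)
    moreover have "set xs \<subseteq> Q" if "xs \<in> chains Q \<rho>' S" for xs
      using that by (auto simp: chains_def in_set_conv_nth)
    ultimately have "inj_on (map f) (chains Q \<rho>' S)"
      by (intro inj_onI) (metis inj_on_map_eq_map inj_on_subset le_sup_iff)
    have "{p\<in>P. \<rho> p \<in> S} = {p\<in>f ` Q. \<rho> p \<in> S}"
      using into onto S by blast
    then have "flag_count P \<rho> S = flag_count (f ` Q) \<rho> S"
      using flag_count_restrict_ranks[OF \<open>finite S\<close>] by metis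
    also have "\<dots> = card (map f ` chains Q \<rho>' S)"
    proof -
      have "chains (f ` Q) \<rho> S = map f ` chains Q \<rho>' S"
        by (rule chains_image_order_embedding) (simp_all add: mono rank)
      then show ?thesis by (simp add: flag_count_eq_card_chains)
    qed
    also have "\<dots> = flag_count Q \<rho>' S"
      by (simp add: flag_count_eq_card_chains card_image \<open>inj_on (map f) _\<close>)
    finally show ?thesis .
  qed
  then show ?thesis by (simp add: ab_index_def)
qed

lemma flag_count_insert_greatest:
  assumes "finite Q" and "finite T" and T_less: "\<forall>t\<in>T. t < j"
  shows "flag_count Q \<rho> (insert j T) = (\<Sum>x\<in>{x\<in>Q. \<rho> x = j}. flag_count {y\<in>Q. y \<subset> x} \<rho> T)"
proof -
  let ?L = "sorted_list_of_set T" and ?k = "card T"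
  let ?X = "{x\<in>Q. \<rho> x = j}" and ?append = "\<lambda>(x, ys). ys @ [x]"
  have sorted_insert: "sorted_list_of_set (insert j T) = ?L @ [j]"
    using assms by (intro sorted_list_of_set_unique[THEN iffD1])
      (auto simp: sorted_wrt_append \<open>finite T\<close>)
  have card_insert: "card (insert j T) = Suc ?k"
    using assms by auto
  have "chains Q \<rho> (insert j T) = ?append ` Sigma ?X (\<lambda>x. chains {y\<in>Q. y \<subset> x} \<rho> T)"
  proof (intro subset_antisym subsetI)
    fix zs assume zs: "zs \<in> chains Q \<rho> (insert j T)"
    have len: "length zs = Suc ?k" using zs card_insert by (simp add: chains_def)
    have links: "\<forall>i. Suc i < length zs \<longrightarrow> zs ! i \<subset> zs ! Suc i"
      using zs by (simp add: chains_def)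
    have zs_Q: "zs ! i \<in> Q \<and> \<rho> (zs ! i) = (?L @ [j]) ! i" if "i < Suc ?k" for i
      using zs len sorted_insert that by (auto simp: chains_def)
    have "sorted_wrt (\<subset>) zs"
      using links by (subst sorted_wrt_iff_nth_Suc_transp) (auto simp: transp_def)
    then have below_last: "zs ! i \<subset> zs ! ?k" if "i < ?k" for i
      using len that by (simp add: sorted_wrt_nth_less)
    have "zs = take ?k zs @ [zs ! ?k]"
      using len by (metis lessI take_Suc_conv_app_nth take_all order_refl)
    moreover have "zs ! ?k \<in> ?X"
      using zs_Q[of ?k] by (simp add: nth_append)
    moreover have "take ?k zs \<in> chains {y\<in>Q. y \<subset> zs ! ?k} \<rho> T"
      using len zs_Q links below_last by (auto simp: chains_def nth_append)
    ultimately show "zs \<in> ?append ` Sigma ?X (\<lambda>x. chains {y\<in>Q. y \<subset> x} \<rho> T)"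
      by force
  next
    fix zs assume "zs \<in> ?append ` Sigma ?X (\<lambda>x. chains {y\<in>Q. y \<subset> x} \<rho> T)"
    then obtain x ys where x: "x \<in> ?X" and ys: "ys \<in> chains {y\<in>Q. y \<subset> x} \<rho> T"
      and zs: "zs = ys @ [x]" by force
    have len: "length ys = ?k" using ys by (simp add: chains_def)
    show "zs \<in> chains Q \<rho> (insert j T)"
      unfolding chains_def zs
    proof (intro CollectI conjI allI impI)
      show "length (ys @ [x]) = card (insert j T)" using len card_insert by simp
    next
      fix i assume "i < length (ys @ [x])"
      then show "(ys @ [x]) ! i \<in> Q" "\<rho> ((ys @ [x]) ! i) = sorted_list_of_set (insert j T) ! i"
        using ys x len sorted_insert by (auto simp: chains_def nth_append less_Suc_eq)
    next
      fix i assume "Suc i < length (ys @ [x])"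
      then show "(ys @ [x]) ! i \<subset> (ys @ [x]) ! Suc i"
        using ys len by (auto simp: chains_def nth_append less_Suc_eq)
    qed
  qed
  moreover have "inj_on ?append (Sigma ?X (\<lambda>x. chains {y\<in>Q. y \<subset> x} \<rho> T))"
    by (rule inj_onI) auto
  ultimately have "flag_count Q \<rho> (insert j T) = card (Sigma ?X (\<lambda>x. chains {y\<in>Q. y \<subset> x} \<rho> T))"
    by (simp add: flag_count_eq_card_chains card_image)
  also have "\<dots> = (\<Sum>x\<in>?X. flag_count {y\<in>Q. y \<subset> x} \<rho> T)"
    using \<open>finite Q\<close> by (simp add: finite_chains flag_count_eq_card_chains)
  finally show ?thesis .
qed

section \<open>The Major MacMahon map on ab-indices\<close>

definition q :: "int poly" where
  "q = monom 1 1"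

lemma monom_one_eq_q_power: "monom 1 i = q ^ i"
  by (simp add: q_def monom_power)

definition b_positions_sum :: "bool list \<Rightarrow> nat" where
  "b_positions_sum w = (\<Sum>i<length w. if w ! i then Suc i else 0)"

definition theta_v :: "nat \<Rightarrow> nat set \<Rightarrow> int poly" where
  "theta_v n S = (\<Prod>i\<in>{1..n}. if i \<in> S then q ^ i else 1 - q ^ i)"

lemma Theta_eq_sum_superset:
  assumes "finite X" "{w. p w \<noteq> 0} \<subseteq> X"
  shows "Theta p = (\<Sum>w\<in>X. smult (p w) (monom 1 (b_positions_sum w)))"
  unfolding Theta_def b_positions_sum_def
  by (rule sum.mono_neutral_left) (use assms in auto)

lemma foldr_nc_mul_letters:
  assumes "\<forall>l\<in>set ls. \<forall>w. length w \<noteq> 1 \<longrightarrow> l w = 0"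
  shows "foldr nc_mul ls nc_one w =
    (if length w = length ls then \<Prod>i<length ls. (ls ! i) [w ! i] else 0)"
  using assms
proof (induction ls arbitrary: w)
  case Nil
  then show ?case by (simp add: nc_one_def)
next
  case (Cons l ls)
  have l0: "l u = 0" if "length u \<noteq> 1" for u using Cons.prems that by simp
  show ?case
  proof (cases w)
    case Nil
    then show ?thesis by (simp add: nc_mul_def l0)
  next
    case (Cons b w')
    have "foldr nc_mul (l # ls) nc_one w = (\<Sum>k\<in>{1}. l (take k w) * foldr nc_mul ls nc_one (drop k w))"
      unfolding foldr.simps comp_def nc_mul_def
      by (rule sum.mono_neutral_right) (auto simp: Cons l0)
    also have "\<dots> = l [b] * foldr nc_mul ls nc_one w'"
      using Cons by simp
    finally show ?thesis
      using Cons.IH Cons.prems by (simp add: Cons prod.lessThan_Suc_shift del: prod.lessThan_Suc)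
  qed
qed

definition v_letter :: "nat set \<Rightarrow> nat \<Rightarrow> bool \<Rightarrow> int" where
  "v_letter S j b = (if j \<in> S then (if b then 1 else 0) else (if b then -1 else 1))"

lemma v_mono_apply:
  "v_mono n S w = (if length w = n then \<Prod>i<n. v_letter S (Suc i) (w ! i) else 0)"
proof -
  let ?ls = "map (\<lambda>i. if i \<in> S then nc_b else nc_sub nc_a nc_b) [1..<Suc n]"
  have letters: "\<forall>l\<in>set ?ls. \<forall>w. length w \<noteq> 1 \<longrightarrow> l w = 0"
    by (auto simp: nc_b_def nc_sub_def nc_a_def)
  have entries: "(?ls ! i) [w ! i] = v_letter S (Suc i) (w ! i)" if "i < n" for i
    using that by (auto simp: nth_map_upt nc_b_def nc_sub_def nc_a_def v_letter_def simp del: upt_Suc)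
  have "(\<Prod>i<n. (?ls ! i) [w ! i]) = (\<Prod>i<n. v_letter S (Suc i) (w ! i))"
    using entries by (intro prod.cong) auto
  then show ?thesis
    unfolding v_mono_def foldr_nc_mul_letters[OF letters] by (simp del: upt_Suc)
qed

lemma sum_bool_lists_prod:
  fixes e :: "nat \<Rightarrow> bool \<Rightarrow> 'a::comm_semiring_1"
  shows "(\<Sum>w\<in>{w. length w = n}. \<Prod>i<n. e i (w ! i)) = (\<Prod>i<n. e i False + e i True)"
proof (induction n)
  case 0
  have "{w::bool list. length w = 0} = {[]}" by auto
  then show ?case by simp
next
  case (Suc n)
  have lists_Suc: "{w::bool list. length w = Suc n} = (\<lambda>(w, b). w @ [b]) ` ({w. length w = n} \<times> UNIV)"
    by (auto simp: image_iff length_Suc_conv_rev)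
  have "inj_on (\<lambda>(w, b). w @ [b]) ({w::bool list. length w = n} \<times> UNIV)"
    by (rule inj_onI) auto
  then have "(\<Sum>w\<in>{w. length w = Suc n}. \<Prod>i<Suc n. e i (w ! i))
      = (\<Sum>(w, b)\<in>{w. length w = n} \<times> UNIV. \<Prod>i<Suc n. e i ((w @ [b]) ! i))"
    unfolding lists_Suc by (subst sum.reindex) (simp_all add: case_prod_unfold)
  also have "\<dots> = (\<Sum>w\<in>{w. length w = n}. \<Sum>b\<in>UNIV. (\<Prod>i<n. e i (w ! i)) * e n b)"
    unfolding sum.cartesian_product[symmetric]
    by (intro sum.cong refl) (auto simp: nth_append intro!: prod.cong)
  also have "\<dots> = (\<Prod>i<Suc n. e i False + e i True)"
    by (simp add: UNIV_bool distrib_left[symmetric] sum_distrib_right[symmetric] Suc add.commute)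
  finally show ?case .
qed

lemma prod_monom:
  "(\<Prod>i<(n::nat). monom (c i) (d i)) = monom (\<Prod>i<n. c i :: 'a::comm_semiring_1) (\<Sum>i<n. d i)"
  by (induction n) (auto simp: mult_monom monom_0 one_pCons)

lemma sum_Theta_v_mono:
  "(\<Sum>w\<in>{w. length w = n}. smult (v_mono n S w) (monom 1 (b_positions_sum w))) = theta_v n S"
proof -
  have "(\<Sum>w\<in>{w. length w = n}. smult (v_mono n S w) (monom 1 (b_positions_sum w)))
     = (\<Sum>w\<in>{w. length w = n}. \<Prod>i<n. monom (v_letter S (Suc i) (w ! i)) (if w ! i then Suc i else 0))"
    by (intro sum.cong refl) (auto simp: v_mono_apply prod_monom smult_monom b_positions_sum_def)
  also have "\<dots> = (\<Prod>i<n. monom (v_letter S (Suc i) False) 0 + monom (v_letter S (Suc i) True) (Suc i))"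
    by (rule sum_bool_lists_prod[where e = "\<lambda>i b. monom (v_letter S (Suc i) b) (if b then Suc i else 0)", simplified])
  also have "\<dots> = (\<Prod>i<n. if Suc i \<in> S then q ^ Suc i else 1 - q ^ Suc i)"
    by (intro prod.cong refl)
      (auto simp: v_letter_def monom_0 one_pCons minus_monom[symmetric] monom_one_eq_q_power)
  also have "\<dots> = theta_v n S"
    unfolding theta_v_def
    by (rule prod.reindex_bij_witness[where i = "\<lambda>i. i - 1" and j = Suc]) auto
  finally show ?thesis .
qed

lemma Theta_ab_index:
  "Theta (ab_index n P \<rho>) = (\<Sum>S\<in>Pow {1..n}. of_nat (flag_count P \<rho> S) * theta_v n S)"
proof -
  have "finite {w::bool list. length w = n}"
    using finite_lists_length_eq[of "UNIV::bool set" n] by simp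
  moreover have "{w. ab_index n P \<rho> w \<noteq> 0} \<subseteq> {w. length w = n}"
    by (rule subsetI, rule ccontr) (simp add: ab_index_def v_mono_apply)
  ultimately have "Theta (ab_index n P \<rho>)
      = (\<Sum>w\<in>{w. length w = n}. smult (ab_index n P \<rho> w) (monom 1 (b_positions_sum w)))"
    by (rule Theta_eq_sum_superset)
  also have "\<dots> = (\<Sum>S\<in>Pow {1..n}. of_nat (flag_count P \<rho> S) *
      (\<Sum>w\<in>{w. length w = n}. smult (v_mono n S w) (monom 1 (b_positions_sum w))))"
    unfolding ab_index_def smult_sum sum_distrib_left
    by (subst sum.swap) (simp add: of_nat_poly mult.commute)
  finally show ?thesis by (simp add: sum_Theta_v_mono)
qed

section \<open>q-identities\<close>

definition qpoch :: "nat \<Rightarrow> nat \<Rightarrow> int poly" where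
  "qpoch a b = (\<Prod>i\<in>{a..b}. 1 - q ^ i)"

lemma one_minus_q_mult_qint: "(1 - q) * qint m = 1 - q ^ m"
proof (induction m)
  case (Suc m)
  have "qint (Suc m) = qint m + q ^ m"
    by (simp add: qint_def flip: monom_one_eq_q_power)
  then have "(1 - q) * qint (Suc m) = (1 - q) * qint m + (1 - q) * q ^ m"
    by (simp only: distrib_left)
  also have "\<dots> = 1 - q ^ Suc m"
    unfolding Suc.IH by (simp add: algebra_simps)
  finally show ?case .
qed (simp add: qint_def)

lemma qfact_mult_qpoch:
  assumes "j \<le> m"
  shows "qfact j * (1 - q) ^ j * qpoch (Suc j) m = qpoch 1 m"
  using assms
proof (induction j)
  case 0
  then show ?case by (simp add: qfact_def)
next
  case (Suc j)
  have "qfact (Suc j) * (1 - q) ^ Suc j * qpoch (Suc (Suc j)) m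
      = qfact j * (1 - q) ^ j * (((1 - q) * qint (Suc j)) * qpoch (Suc (Suc j)) m)"
    by (simp add: qfact_def prod.nat_ivl_Suc' mult_ac)
  also have "\<dots> = qfact j * (1 - q) ^ j * qpoch (Suc j) m"
    using Suc.prems unfolding one_minus_q_mult_qint qpoch_def
    by (simp add: prod.atLeast_Suc_atMost)
  also have "\<dots> = qpoch 1 m"
    using Suc by simp
  finally show ?case .
qed

lemma one_minus_q_power_nonzero: "m > 0 \<Longrightarrow> 1 - q ^ m \<noteq> 0"
proof
  assume "m > 0" "1 - q ^ m = 0"
  then have "coeff (1 - q ^ m) m = 0" by simp
  with \<open>m > 0\<close> show False
    by (simp add: monom_one_eq_q_power[symmetric] coeff_monom)
qed

lemma binomial_qfact_sum:
  "(\<Sum>j\<le>n. of_nat (n choose j) * x ^ j * qfact j * q ^ j * qpoch (Suc j) n)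
     = (1 + (x - 1) * q) ^ n * qfact n"
proof -
  have "(\<Sum>j\<le>n. of_nat (n choose j) * x ^ j * qfact j * q ^ j * qpoch (Suc j) n) * (1 - q) ^ n
     = (\<Sum>j\<le>n. of_nat (n choose j) * (x * q) ^ j * (1 - q) ^ (n - j)) * qpoch 1 n"
    unfolding sum_distrib_right
  proof (intro sum.cong refl)
    fix j assume "j \<in> {..n}"
    then have "(1 - q) ^ n = (1 - q) ^ j * (1 - q) ^ (n - j)"
      by (simp flip: power_add)
    then show "of_nat (n choose j) * x ^ j * qfact j * q ^ j * qpoch (Suc j) n * (1 - q) ^ n
       = of_nat (n choose j) * (x * q) ^ j * (1 - q) ^ (n - j) * qpoch 1 n"
      using qfact_mult_qpoch[of j n] \<open>j \<in> {..n}\<close> by (simp add: power_mult_distrib mult_ac)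
  qed
  also have "(\<Sum>j\<le>n. of_nat (n choose j) * (x * q) ^ j * (1 - q) ^ (n - j)) = (1 + (x - 1) * q) ^ n"
    using binomial_ring[of "x * q" "1 - q" n] by (simp add: algebra_simps)
  also have "qpoch 1 n = qfact n * (1 - q) ^ n"
    using qfact_mult_qpoch[of n n] by (simp add: qpoch_def)
  finally show ?thesis
    using one_minus_q_power_nonzero[of 1] by (simp add: mult.assoc)
qed

lemma boolean_qfact_sum:
  "(\<Sum>j\<le>k. of_nat (Suc k choose j) * qfact j * q ^ j * qpoch (Suc j) k) = qfact (Suc k)"
proof -
  let ?S = "\<Sum>j\<le>k. of_nat (Suc k choose j) * qfact j * q ^ j * qpoch (Suc j) k"
  have qpoch_Suc: "qpoch (Suc j) (Suc k) = qpoch (Suc j) k * (1 - q ^ Suc k)" if "j \<le> k" for j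
    using that unfolding qpoch_def by (simp add: prod.nat_ivl_Suc')
  have "(\<Sum>j\<le>k. of_nat (Suc k choose j) * 1 ^ j * qfact j * q ^ j * qpoch (Suc j) (Suc k))
      = ?S * (1 - q ^ Suc k)"
    unfolding sum_distrib_right by (intro sum.cong refl) (simp add: qpoch_Suc mult_ac)
  then have "qfact (Suc k) = ?S * (1 - q ^ Suc k) + qfact (Suc k) * q ^ Suc k"
    using binomial_qfact_sum[of "Suc k" 1] by (simp add: qpoch_def)
  then have "?S * (1 - q ^ Suc k) = qfact (Suc k) * (1 - q ^ Suc k)"
    by (simp add: algebra_simps)
  then show ?thesis
    using one_minus_q_power_nonzero[of "Suc k"] by simp
qed

section \<open>Families closed under subsets\<close>

lemma sum_Pow_by_greatest:
  fixes g :: "nat set \<Rightarrow> 'a::comm_monoid_add"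
  shows "(\<Sum>S\<in>Pow {1..n}. g S) = g {} + (\<Sum>j\<in>{1..n}. \<Sum>T\<in>Pow {1..j - 1}. g (insert j T))"
proof (induction n)
  case (Suc n)
  have Pow_Suc: "Pow {1..Suc n} = Pow {1..n} \<union> insert (Suc n) ` Pow {1..n}"
    by (simp add: atLeastAtMostSuc_conv Pow_insert)
  have "Pow {1..n} \<inter> insert (Suc n) ` Pow {1..n} = {}"
    by auto
  moreover have "inj_on (insert (Suc n)) (Pow {1..n})"
    by (rule inj_onI) (metis Diff_insert_absorb PowD atLeastAtMost_iff not_less_eq_eq order_refl subsetD)
  ultimately have "(\<Sum>S\<in>Pow {1..Suc n}. g S)
      = (\<Sum>S\<in>Pow {1..n}. g S) + (\<Sum>T\<in>Pow {1..n}. g (insert (Suc n) T))"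
    unfolding Pow_Suc by (simp add: sum.union_disjoint sum.reindex)
  then show ?case
    using Suc by (simp add: add.assoc)
qed simp

lemma theta_v_empty: "theta_v n {} = qpoch 1 n"
  by (simp add: theta_v_def qpoch_def)

lemma theta_v_insert_greatest:
  assumes "1 \<le> j" "j \<le> n" and "T \<subseteq> {1..j - 1}"
  shows "theta_v n (insert j T) = theta_v (j - 1) T * q ^ j * qpoch (Suc j) n"
proof -
  let ?f = "\<lambda>i. if i \<in> insert j T then q ^ i else 1 - q ^ i"
  have "{1..n} = {1..j - 1} \<union> insert j {Suc j..n}" "{1..j - 1} \<inter> insert j {Suc j..n} = {}"
    using assms by auto
  then have "prod ?f {1..n} = prod ?f {1..j - 1} * (?f j * prod ?f {Suc j..n})"
    by (simp add: prod.union_disjoint)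
  moreover have "prod ?f {1..j - 1} = theta_v (j - 1) T"
    unfolding theta_v_def using assms by (intro prod.cong) auto
  moreover have "prod ?f {Suc j..n} = qpoch (Suc j) n"
    unfolding qpoch_def using assms by (intro prod.cong) auto
  ultimately show ?thesis
    by (simp add: theta_v_def mult_ac)
qed

definition down_closed :: "'a set set \<Rightarrow> bool" where
  "down_closed Q \<longleftrightarrow> (\<forall>y\<in>Q. \<forall>z. z \<subseteq> y \<longrightarrow> z \<in> Q)"

lemma flag_count_card_insert_greatest:
  assumes "finite Q" and "down_closed Q"
    and T: "T \<subseteq> {1..j - 1}"
  shows "flag_count Q card (insert j T) = (\<Sum>y\<in>{y\<in>Q. card y = j}. flag_count (Pow y) card T)"
proof -
  have "finite T" using T finite_subset by blast
  have T_less: "\<forall>t\<in>T. t < j" using T by (auto simp: subset_iff)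
  have "flag_count {z\<in>Q. z \<subset> y} card T = flag_count (Pow y) card T" if "y \<in> Q" "card y = j" for y
  proof -
    have "{z\<in>{z\<in>Q. z \<subset> y}. card z \<in> T} = {z\<in>Pow y. card z \<in> T}"
      using that T_less \<open>down_closed Q\<close> by (auto simp: down_closed_def)
    then show ?thesis
      by (metis (no_types) flag_count_restrict_ranks[OF \<open>finite T\<close>])
  qed
  then show ?thesis
    using flag_count_insert_greatest[OF \<open>finite Q\<close> \<open>finite T\<close> T_less] by simp
qed

lemma Theta_ab_index_card_recursion:
  assumes "finite Q" and "down_closed Q"
  shows "Theta (ab_index n Q card) = qpoch 1 n +
    (\<Sum>j\<in>{1..n}. (\<Sum>y\<in>{y\<in>Q. card y = j}. Theta (ab_index (j - 1) (Pow y) card)) * q ^ j * qpoch (Suc j) n)"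
proof -
  have inner: "(\<Sum>T\<in>Pow {1..j - 1}. of_nat (flag_count Q card (insert j T)) * theta_v n (insert j T))
      = (\<Sum>y\<in>{y\<in>Q. card y = j}. Theta (ab_index (j - 1) (Pow y) card)) * q ^ j * qpoch (Suc j) n"
    if "j \<in> {1..n}" for j
  proof -
    have "(\<Sum>T\<in>Pow {1..j - 1}. of_nat (flag_count Q card (insert j T)) * theta_v n (insert j T))
      = (\<Sum>T\<in>Pow {1..j - 1}. \<Sum>y\<in>{y\<in>Q. card y = j}.
           of_nat (flag_count (Pow y) card T) * theta_v (j - 1) T * (q ^ j * qpoch (Suc j) n))"
      using that flag_count_card_insert_greatest[OF assms]
      by (intro sum.cong refl) (simp add: theta_v_insert_greatest sum_distrib_left sum_distrib_right of_nat_sum mult_ac)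
    also have "\<dots> = (\<Sum>y\<in>{y\<in>Q. card y = j}. Theta (ab_index (j - 1) (Pow y) card)) * (q ^ j * qpoch (Suc j) n)"
      by (subst sum.swap) (simp add: Theta_ab_index sum_distrib_right)
    finally show ?thesis by (simp add: mult.assoc)
  qed
  have "Theta (ab_index n Q card)
      = of_nat (flag_count Q card {}) * theta_v n {} +
        (\<Sum>j\<in>{1..n}. \<Sum>T\<in>Pow {1..j - 1}. of_nat (flag_count Q card (insert j T)) * theta_v n (insert j T))"
    unfolding Theta_ab_index by (rule sum_Pow_by_greatest)
  also have "\<dots> = qpoch 1 n +
    (\<Sum>j\<in>{1..n}. (\<Sum>y\<in>{y\<in>Q. card y = j}. Theta (ab_index (j - 1) (Pow y) card)) * q ^ j * qpoch (Suc j) n)"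
    using inner by (simp add: flag_count_empty theta_v_empty)
  finally show ?thesis .
qed

lemma finite_members_down_closed:
  assumes "finite Q" "down_closed Q" "y \<in> Q"
  shows "finite y"
proof -
  have "Pow y \<subseteq> Q" using assms(2,3) by (auto simp: down_closed_def)
  then show ?thesis using assms(1) by (metis finite_Pow_iff finite_subset)
qed

lemma Theta_ab_index_card_counts:
  assumes "finite Q" and "down_closed Q" and "{} \<in> Q"
    and Boolean: "\<And>y. y \<in> Q \<Longrightarrow> 1 \<le> card y \<Longrightarrow> card y \<le> n \<Longrightarrow>
      Theta (ab_index (card y - 1) (Pow y) card) = qfact (card y)"
  shows "Theta (ab_index n Q card)
    = (\<Sum>j\<le>n. of_nat (card {y\<in>Q. card y = j}) * qfact j * q ^ j * qpoch (Suc j) n)"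
proof -
  have "{y\<in>Q. card y = 0} = {{}}"
    using assms(3) finite_members_down_closed[OF assms(1,2)] by auto
  then have "(\<Sum>j\<le>n. of_nat (card {y\<in>Q. card y = j}) * qfact j * q ^ j * qpoch (Suc j) n)
      = qpoch 1 n + (\<Sum>j\<in>{1..n}. of_nat (card {y\<in>Q. card y = j}) * qfact j * q ^ j * qpoch (Suc j) n)"
    by (simp add: atMost_atLeast0 sum.atLeast_Suc_atMost qfact_def)
  also have "\<dots> = Theta (ab_index n Q card)"
  proof -
    have "(\<Sum>y\<in>{y\<in>Q. card y = j}. Theta (ab_index (j - 1) (Pow y) card))
        = of_nat (card {y\<in>Q. card y = j}) * qfact j" if "j \<in> {1..n}" for j
    proof -
      have "(\<Sum>y\<in>{y\<in>Q. card y = j}. Theta (ab_index (j - 1) (Pow y) card))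
          = (\<Sum>y\<in>{y\<in>Q. card y = j}. qfact j)"
      proof (intro sum.cong refl)
        fix y assume "y \<in> {y\<in>Q. card y = j}"
        then show "Theta (ab_index (j - 1) (Pow y) card) = qfact j"
          using Boolean[of y] that by auto
      qed
      then show ?thesis by simp
    qed
    then show ?thesis
      unfolding Theta_ab_index_card_recursion[OF assms(1,2)]
      by (intro arg_cong2[where f = "(+)"] sum.cong refl) simp_all
  qed
  finally show ?thesis ..
qed

lemma Theta_ab_index_Pow:
  assumes "finite x" and "card x = Suc k"
  shows "Theta (ab_index k (Pow x) card) = qfact (Suc k)"
  using assms
proof (induction k arbitrary: x rule: less_induct)
  case (less k)
  have "down_closed (Pow x)"
    by (auto simp: down_closed_def)
  moreover have "Theta (ab_index (card y - 1) (Pow y) card) = qfact (card y)"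
    if "y \<in> Pow x" "1 \<le> card y" "card y \<le> k" for y
  proof -
    have "finite y" "card y = Suc (card y - 1)" "card y - 1 < k"
      using that less.prems finite_subset by auto
    then show ?thesis using less.IH by metis
  qed
  moreover have "card {y\<in>Pow x. card y = j} = Suc k choose j" for j
  proof -
    have "{y\<in>Pow x. card y = j} = {y. y \<subseteq> x \<and> card y = j}" by auto
    then show ?thesis using n_subsets[OF \<open>finite x\<close>, of j] less.prems by simp
  qed
  ultimately show ?case
    using Theta_ab_index_card_counts[of "Pow x" k] less.prems
    by (simp add: boolean_qfact_sum)
qed

lemma Theta_ab_index_down_closed:
  assumes "finite Q" and "down_closed Q" and "{} \<in> Q"
  shows "Theta (ab_index n Q card)
    = (\<Sum>j\<le>n. of_nat (card {y\<in>Q. card y = j}) * qfact j * q ^ j * qpoch (Suc j) n)"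
proof (rule Theta_ab_index_card_counts[OF assms])
  fix y assume "y \<in> Q" "1 \<le> card y"
  then have "finite y" "card y = Suc (card y - 1)"
    using finite_members_down_closed[OF assms(1,2)] by auto
  then show "Theta (ab_index (card y - 1) (Pow y) card) = qfact (card y)"
    by (metis Theta_ab_index_Pow)
qed

section \<open>The simplex\<close>

lemma face_rank_convex_hull_affine_independent:
  fixes c :: "'a::euclidean_space set"
  assumes "\<not> affine_dependent c"
  shows "face_rank (convex hull c) = card c"
  using aff_dim_affine_independent[OF assms] by (simp add: face_rank_def aff_dim_convex_hull)

lemma convex_hull_subset_iff_affine_independent:
  fixes S :: "'a::euclidean_space set"
  assumes "\<not> affine_dependent S" "c \<subseteq> S" "d \<subseteq> S"
  shows "convex hull c \<subseteq> convex hull d \<longleftrightarrow> c \<subseteq> d"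
proof
  assume hull: "convex hull c \<subseteq> convex hull d"
  show "c \<subseteq> d"
  proof
    fix x assume "x \<in> c"
    show "x \<in> d"
    proof (rule ccontr)
      assume "x \<notin> d"
      then have "affine hull {x} \<inter> affine hull d = {}"
        using assms \<open>x \<in> c\<close> by (intro disjoint_affine_hull[of S]) auto
      moreover have "x \<in> convex hull d"
        using hull \<open>x \<in> c\<close> hull_subset[of c convex] by blast
      then have "x \<in> affine hull d"
        using convex_hull_subset_affine_hull by blast
      ultimately show False
        by (simp add: affine_hull_sing)
    qed
  qed
qed (rule hull_mono)

lemma ab_index_face_lattice_simplex:
  fixes S :: "'a::euclidean_space set"
  assumes "\<not> affine_dependent S"
  shows "ab_index n (face_lattice (convex hull S)) face_rank = ab_index n (Pow S) card"
proof (rule ab_index_order_embedding[where f = "\<lambda>c. convex hull c"])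
  show "convex hull c \<subseteq> convex hull d \<longleftrightarrow> c \<subseteq> d" if "c \<in> Pow S" "d \<in> Pow S" for c d
    using that convex_hull_subset_iff_affine_independent[OF assms] by blast
  show "face_rank (convex hull c) = card c" if "c \<in> Pow S" for c
    using that assms affine_dependent_subset face_rank_convex_hull_affine_independent by blast
  show "(\<lambda>c. convex hull c) ` Pow S \<subseteq> face_lattice (convex hull S)"
    using face_of_convex_hull_affine_independent[OF assms] by (auto simp: face_lattice_def)
  show "y \<in> (\<lambda>c. convex hull c) ` Pow S" if "y \<in> face_lattice (convex hull S)" for y
    using that face_of_convex_hull_affine_independent[OF assms] by (auto simp: face_lattice_def)
qed

lemma affine_independent_zero_axes:
  "\<not> affine_dependent (insert (0::real^'n) (range (\<lambda>i. axis i 1)))"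
proof -
  have "independent (range (\<lambda>i. axis i (1::real) :: real^'n))"
    by (rule pairwise_orthogonal_independent)
      (auto simp: pairwise_def orthogonal_def inner_axis_axis)
  moreover have "0 \<notin> range (\<lambda>i. axis i (1::real) :: real^'n)"
    by auto
  ultimately show ?thesis
    by (simp add: affine_dependent_iff_dependent)
qed

lemma card_zero_axes: "card (insert (0::real^'n) (range (\<lambda>i. axis i 1))) = Suc CARD('n)"
proof -
  have "inj (\<lambda>i::'n. axis i (1::real))"
    by (rule injI) (simp add: axis_eq_axis)
  moreover have "0 \<notin> range (\<lambda>i. axis i (1::real) :: real^'n)"
    by auto
  ultimately show ?thesis
    by (simp add: card_image)
qed

lemma aff_dim_simplex_poly: "aff_dim (simplex_poly :: (real^'n) set) = CARD('n)"
proof -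
  have "aff_dim (insert (0::real^'n) (range (\<lambda>i. axis i 1))) = CARD('n)"
    using aff_dim_affine_independent[OF affine_independent_zero_axes[where 'n='n]]
      card_zero_axes[where 'n='n] by simp
  then show ?thesis
    by (simp add: simplex_poly_def aff_dim_convex_hull)
qed

lemma Theta_Psi_simplex_poly:
  "Theta (Psi (simplex_poly :: (real ^ 'n) set)) = qfact (Suc CARD('n))"
  unfolding Psi_def aff_dim_simplex_poly
  using Theta_ab_index_Pow[OF _ card_zero_axes]
  by (simp add: simplex_poly_def ab_index_face_lattice_simplex[OF affine_independent_zero_axes])

section \<open>The cross-polytope\<close>

definition cross_vertices :: "(real ^ 'n) set" where
  "cross_vertices = range (\<lambda>i. axis i 1) \<union> range (\<lambda>i. axis i (-1))"

definition antipodal_free :: "(real ^ 'n) set set" where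
  "antipodal_free = {d. d \<subseteq> cross_vertices \<and> (\<forall>i. \<not> (axis i 1 \<in> d \<and> axis i (-1) \<in> d))}"

definition face_normal :: "(real ^ 'n) set \<Rightarrow> real ^ 'n" where
  "face_normal d = (\<chi> i. if axis i 1 \<in> d then 1 else if axis i (-1) \<in> d then -1 else 0)"

lemma cross_polytope_eq: "cross_polytope = convex hull cross_vertices"
  by (simp add: cross_polytope_def cross_vertices_def)

lemma mem_cross_vertices: "v \<in> cross_vertices \<longleftrightarrow> (\<exists>i. v = axis i 1 \<or> v = axis i (-1))"
  by (auto simp: cross_vertices_def)

lemma finite_cross_vertices: "finite cross_vertices"
  by (simp add: cross_vertices_def)

lemma finite_antipodal_free: "finite antipodal_free"
proof -
  have "antipodal_free \<subseteq> Pow cross_vertices"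
    by (auto simp: antipodal_free_def)
  then show ?thesis
    using finite_cross_vertices by (metis finite_Pow_iff finite_subset)
qed

lemma down_closed_antipodal_free: "down_closed antipodal_free"
  by (auto simp: down_closed_def antipodal_free_def)

lemma empty_in_antipodal_free: "{} \<in> antipodal_free"
  by (simp add: antipodal_free_def)

lemma affine_independent_antipodal_free:
  assumes "d \<in> antipodal_free"
  shows "\<not> affine_dependent d"
proof -
  have "x \<bullet> y = 0" if "x \<in> d" "y \<in> d" "x \<noteq> y" for x y
  proof -
    have "x \<in> cross_vertices" "y \<in> cross_vertices"
      using that assms by (auto simp: antipodal_free_def)
    then obtain i j where x: "x = axis i 1 \<or> x = axis i (-1)" and y: "y = axis j 1 \<or> y = axis j (-1)"
      unfolding mem_cross_vertices by blast
    have "\<not> (axis i 1 \<in> d \<and> axis i (-1) \<in> d)"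
      using assms by (simp add: antipodal_free_def)
    with x y that show ?thesis
      by (cases "i = j") (auto simp: inner_axis_axis)
  qed
  then have "pairwise orthogonal d"
    by (simp add: pairwise_def orthogonal_def)
  moreover have "0 \<notin> d"
    using assms by (auto simp: antipodal_free_def mem_cross_vertices subset_iff)
  ultimately show ?thesis
    using affine_dependent_imp_dependent pairwise_orthogonal_independent by blast
qed

lemma inner_face_normal_le:
  assumes "v \<in> cross_vertices"
  shows "face_normal d \<bullet> v \<le> 1"
  using assms by (auto simp: mem_cross_vertices face_normal_def inner_axis)

lemma inner_face_normal_eq_1:
  assumes "d \<in> antipodal_free" and "v \<in> cross_vertices"
  shows "face_normal d \<bullet> v = 1 \<longleftrightarrow> v \<in> d"
  using assms
  by (auto simp: mem_cross_vertices face_normal_def inner_axis antipodal_free_def split: if_splits)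

lemma convex_hull_antipodal_free:
  assumes d: "d \<in> antipodal_free"
  shows "convex hull d = convex hull cross_vertices \<inter> {x. face_normal d \<bullet> x = 1}"
proof
  have dV: "d \<subseteq> cross_vertices" using d by (simp add: antipodal_free_def)
  have "convex hull d \<subseteq> {x. face_normal d \<bullet> x = 1}"
    using dV inner_face_normal_eq_1[OF d] by (intro hull_minimal) (auto simp: convex_hyperplane)
  moreover have "convex hull d \<subseteq> convex hull cross_vertices"
    using dV by (rule hull_mono)
  ultimately show "convex hull d \<subseteq> convex hull cross_vertices \<inter> {x. face_normal d \<bullet> x = 1}"
    by blast
next
  have dV: "d \<subseteq> cross_vertices" using d by (simp add: antipodal_free_def)
  note fin = finite_cross_vertices
  show "convex hull cross_vertices \<inter> {x. face_normal d \<bullet> x = 1} \<subseteq> convex hull d"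
  proof
    fix x assume x: "x \<in> convex hull cross_vertices \<inter> {x. face_normal d \<bullet> x = 1}"
    then obtain u where u0: "\<forall>v\<in>cross_vertices. 0 \<le> u v" and u1: "sum u cross_vertices = 1"
      and ux: "(\<Sum>v\<in>cross_vertices. u v *\<^sub>R v) = x"
      using convex_hull_finite[OF fin] by auto
    have nonneg: "0 \<le> u v * (1 - face_normal d \<bullet> v)" if "v \<in> cross_vertices" for v
      using u0 inner_face_normal_le[OF that, of d] that by simp
    have "(\<Sum>v\<in>cross_vertices. u v * (1 - face_normal d \<bullet> v)) = 1 - face_normal d \<bullet> x"
      unfolding ux[symmetric] using u1 by (simp add: inner_sum_right right_diff_distrib sum_subtractf)
    also have "\<dots> = 0" using x by simp
    finally have "\<forall>v\<in>cross_vertices. u v * (1 - face_normal d \<bullet> v) = 0"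
      using sum_nonneg_eq_0_iff[where f = "\<lambda>v. u v * (1 - face_normal d \<bullet> v)", OF fin] nonneg
      by blast
    then have u_out: "u v = 0" if "v \<in> cross_vertices - d" for v
      using that inner_face_normal_eq_1[OF d] by auto
    have "sum u d = 1"
      using u1 sum.mono_neutral_right[OF fin dV, of u] u_out by simp
    moreover have "(\<Sum>v\<in>d. u v *\<^sub>R v) = x"
      using ux sum.mono_neutral_right[OF fin dV, of "\<lambda>v. u v *\<^sub>R v"] u_out by simp
    ultimately show "x \<in> convex hull d"
      using u0 dV finite_subset[OF dV fin] by (auto simp: convex_hull_finite)
  qed
qed

lemma face_of_cross_polytope_antipodal_free:
  assumes "d \<in> antipodal_free"
  shows "convex hull d face_of convex hull cross_vertices"
proof -
  have "convex hull cross_vertices \<subseteq> {x. face_normal d \<bullet> x \<le> 1}"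
    by (rule hull_minimal) (auto simp: inner_face_normal_le convex_halfspace_le)
  then show ?thesis
    unfolding convex_hull_antipodal_free[OF assms]
    by (intro face_of_Int_supporting_hyperplane_le) auto
qed

lemma convex_hull_subset_iff_antipodal_free:
  assumes "c \<in> antipodal_free" and d: "d \<in> antipodal_free"
  shows "convex hull c \<subseteq> convex hull d \<longleftrightarrow> c \<subseteq> d"
proof
  assume hull: "convex hull c \<subseteq> convex hull d"
  show "c \<subseteq> d"
  proof
    fix v assume "v \<in> c"
    then have "v \<in> convex hull d" "v \<in> cross_vertices"
      using hull hull_subset[of c convex] assms(1) by (auto simp: antipodal_free_def)
    then show "v \<in> d"
      using inner_face_normal_eq_1[OF d] convex_hull_antipodal_free[OF d] by auto
  qed
qed (rule hull_mono)

lemma zero_in_open_segment_axis: "(0::real^'n) \<in> open_segment (axis i 1) (axis i (-1))"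
proof -
  have "midpoint (axis i 1) (axis i (-1)) = (0::real^'n)"
    by (simp add: midpoint_def vec_eq_iff axis_def)
  moreover have "axis i 1 \<noteq> (axis i (-1) :: real^'n)"
    by (simp add: axis_eq_axis)
  ultimately show ?thesis
    by (metis midpoint_in_open_segment)
qed

lemma zero_in_convex_hull_axis_pair:
  assumes "axis i 1 \<in> c" "axis i (-1) \<in> c"
  shows "(0::real^'n) \<in> convex hull c"
proof -
  have "convex hull {axis i 1, axis i (-1)} \<subseteq> convex hull c"
    using assms by (intro hull_mono) auto
  then show ?thesis
    using zero_in_open_segment_axis[of i] open_closed_segment segment_convex_hull by blast
qed

lemma face_of_cross_polytope_cases:
  assumes F: "F face_of convex hull cross_vertices"
  shows "F = convex hull cross_vertices \<or> (\<exists>d\<in>antipodal_free. F = convex hull d)"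
proof -
  obtain c where "c \<subseteq> cross_vertices" and F_hull: "F = convex hull c"
    using face_of_convex_hull_subset[OF finite_imp_compact[OF finite_cross_vertices] F] by blast
  show ?thesis
  proof (cases "c \<in> antipodal_free")
    case False
    then obtain i where "axis i 1 \<in> c" "axis i (-1) \<in> c"
      using \<open>c \<subseteq> cross_vertices\<close> by (auto simp: antipodal_free_def)
    then have "0 \<in> F"
      using F_hull zero_in_convex_hull_axis_pair by blast
    have "v \<in> F" if v: "v \<in> cross_vertices" for v
    proof -
      obtain j where "v = axis j 1 \<or> v = axis j (-1)"
        using v unfolding mem_cross_vertices by blast
      moreover have "axis j 1 \<in> convex hull cross_vertices" "axis j (-1) \<in> convex hull cross_vertices"
        by (auto intro: hull_inc simp: cross_vertices_def)
      ultimately show ?thesis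
        using F \<open>0 \<in> F\<close> zero_in_open_segment_axis[of j] unfolding face_of_def by blast
    qed
    then have "convex hull cross_vertices \<subseteq> F"
      using face_of_imp_convex[OF F] by (intro hull_minimal) auto
    then show ?thesis
      using face_of_imp_subset[OF F] by auto
  qed (use F_hull in blast)
qed

lemma aff_dim_cross_polytope: "aff_dim (cross_polytope :: (real^'n) set) = CARD('n)"
proof (rule antisym)
  show "aff_dim (cross_polytope :: (real^'n) set) \<le> CARD('n)"
    using aff_dim_le_DIM[of "cross_polytope :: (real^'n) set"] by simp
  obtain i :: 'n where True by blast
  have "insert (0::real^'n) (range (\<lambda>i. axis i 1)) \<subseteq> cross_polytope"
    using zero_in_convex_hull_axis_pair[of i cross_vertices]
    by (auto intro: hull_inc simp: cross_polytope_def cross_vertices_def)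
  then have "aff_dim (simplex_poly :: (real^'n) set) \<le> aff_dim (cross_polytope :: (real^'n) set)"
    unfolding simplex_poly_def aff_dim_convex_hull by (rule aff_dim_subset)
  then show "CARD('n) \<le> aff_dim (cross_polytope :: (real^'n) set)"
    by (simp add: aff_dim_simplex_poly)
qed

definition signed_axes :: "'n set \<times> ('n \<Rightarrow> bool) \<Rightarrow> (real ^ 'n) set" where
  "signed_axes p = (\<lambda>i. axis i (if snd p i then 1 else -1)) ` fst p"

lemma axis_in_signed_axes:
  "(axis i 1 :: real^'n) \<in> signed_axes (I, \<sigma>) \<longleftrightarrow> i \<in> I \<and> \<sigma> i"
  "(axis i (-1) :: real^'n) \<in> signed_axes (I, \<sigma>) \<longleftrightarrow> i \<in> I \<and> \<not> \<sigma> i"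
  by (auto simp: signed_axes_def axis_eq_axis split: if_splits)

lemma card_signed_axes:
  fixes I :: "'n::finite set"
  shows "card (signed_axes (I, \<sigma>)) = card I"
proof -
  have "inj_on (\<lambda>i. axis i (if \<sigma> i then 1 else -1) :: real^'n) I"
    by (rule inj_onI) (simp add: axis_eq_axis split: if_splits)
  then show ?thesis
    by (simp add: signed_axes_def card_image)
qed

lemma signed_axes_eq_iff:
  fixes I I' :: "'n::finite set"
  assumes "\<sigma> \<in> I \<rightarrow>\<^sub>E UNIV" "\<sigma>' \<in> I' \<rightarrow>\<^sub>E UNIV"
  shows "signed_axes (I, \<sigma>) = signed_axes (I', \<sigma>') \<longleftrightarrow> I = I' \<and> \<sigma> = \<sigma>'"
proof
  assume eq: "signed_axes (I, \<sigma>) = signed_axes (I', \<sigma>')"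
  have mem: "i \<in> J \<longleftrightarrow> (axis i 1 :: real^'n) \<in> signed_axes (J, \<tau>) \<or> axis i (-1) \<in> signed_axes (J, \<tau>)"
    for i J \<tau> by (auto simp: axis_in_signed_axes)
  have "I = I'"
  proof (rule set_eqI)
    show "i \<in> I \<longleftrightarrow> i \<in> I'" for i
      using mem[of i I \<sigma>] mem[of i I' \<sigma>'] by (simp add: eq)
  qed
  moreover have "\<sigma> = \<sigma>'"
  proof (rule PiE_ext[OF assms(1)])
    show "\<sigma>' \<in> I \<rightarrow>\<^sub>E UNIV" using assms(2) \<open>I = I'\<close> by simp
    show "\<sigma> i = \<sigma>' i" if "i \<in> I" for i
    proof -
      have "\<sigma> i \<longleftrightarrow> (axis i 1 :: real^'n) \<in> signed_axes (I, \<sigma>)"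
        using that by (simp add: axis_in_signed_axes)
      also have "\<dots> \<longleftrightarrow> (axis i 1 :: real^'n) \<in> signed_axes (I', \<sigma>')"
        by (simp only: eq)
      also have "\<dots> \<longleftrightarrow> \<sigma>' i"
        using that \<open>I = I'\<close> by (simp add: axis_in_signed_axes)
      finally show ?thesis by simp
    qed
  qed
  ultimately show "I = I' \<and> \<sigma> = \<sigma>'" ..
qed simp

lemma antipodal_free_card_eq:
  "{d \<in> antipodal_free. card d = j} =
    signed_axes ` (SIGMA I:{I. card I = j}. I \<rightarrow>\<^sub>E (UNIV :: bool set))"
proof (intro subset_antisym subsetI)
  fix d assume d: "d \<in> {d \<in> antipodal_free. card d = j}"
  define I where "I = {i. axis i 1 \<in> d \<or> axis i (-1) \<in> d}"
  define \<sigma> where "\<sigma> = restrict (\<lambda>i. axis i 1 \<in> d) I"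
  have "signed_axes (I, \<sigma>) = d"
  proof (intro subset_antisym subsetI)
    fix v assume "v \<in> signed_axes (I, \<sigma>)"
    then show "v \<in> d"
      by (auto simp: signed_axes_def I_def \<sigma>_def)
  next
    fix v assume "v \<in> d"
    moreover have "v \<in> cross_vertices"
      using \<open>v \<in> d\<close> d by (auto simp: antipodal_free_def)
    then obtain i where "v = axis i 1 \<or> v = axis i (-1)"
      unfolding mem_cross_vertices by blast
    moreover have "\<not> (axis i 1 \<in> d \<and> axis i (-1) \<in> d)"
      using d by (simp add: antipodal_free_def)
    ultimately show "v \<in> signed_axes (I, \<sigma>)"
      by (auto simp: axis_in_signed_axes I_def \<sigma>_def)
  qed
  moreover have "(I, \<sigma>) \<in> (SIGMA I:{I. card I = j}. I \<rightarrow>\<^sub>E UNIV)"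
    using card_signed_axes[of I \<sigma>] \<open>signed_axes (I, \<sigma>) = d\<close> d by (simp add: \<sigma>_def)
  ultimately show "d \<in> signed_axes ` (SIGMA I:{I. card I = j}. I \<rightarrow>\<^sub>E UNIV)"
    by (metis image_eqI)
next
  fix d assume "d \<in> signed_axes ` (SIGMA I:{I. card I = j}. I \<rightarrow>\<^sub>E (UNIV :: bool set))"
  then obtain I \<sigma> where "card I = j" and d: "d = signed_axes (I, \<sigma>)"
    by force
  have "d \<subseteq> cross_vertices"
    by (auto simp: d signed_axes_def cross_vertices_def)
  then show "d \<in> {d \<in> antipodal_free. card d = j}"
    by (simp add: antipodal_free_def d axis_in_signed_axes card_signed_axes \<open>card I = j\<close>)
qed

lemma card_antipodal_free:
  "card {d \<in> (antipodal_free :: (real^'n) set set). card d = j} = (CARD('n) choose j) * 2 ^ j"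
proof -
  let ?Sig = "SIGMA I:{I::'n set. card I = j}. I \<rightarrow>\<^sub>E (UNIV :: bool set)"
  have "inj_on (signed_axes :: _ \<Rightarrow> (real^'n) set) ?Sig"
  proof (rule inj_onI)
    fix p p' assume "p \<in> ?Sig" "p' \<in> ?Sig" "(signed_axes p :: (real^'n) set) = signed_axes p'"
    then show "p = p'"
      by (cases p, cases p') (simp add: signed_axes_eq_iff)
  qed
  then have "card {d \<in> (antipodal_free :: (real^'n) set set). card d = j} = card ?Sig"
    by (simp add: antipodal_free_card_eq card_image)
  also have "\<dots> = (\<Sum>I\<in>{I::'n set. card I = j}. card (I \<rightarrow>\<^sub>E (UNIV :: bool set)))"
    by (rule card_SigmaI) (simp_all add: finite_PiE)
  also have "\<dots> = (\<Sum>I\<in>{I::'n set. card I = j}. 2 ^ j)"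
    by (intro sum.cong refl) (simp add: card_PiE)
  also have "\<dots> = card {I::'n set. card I = j} * 2 ^ j"
    by simp
  also have "card {I::'n set. card I = j} = CARD('n) choose j"
    using n_subsets[of "UNIV :: 'n set" j] by simp
  finally show ?thesis .
qed

lemma ab_index_face_lattice_cross_polytope:
  "ab_index CARD('n) (face_lattice (cross_polytope :: (real^'n) set)) face_rank
     = ab_index CARD('n) (antipodal_free :: (real^'n) set set) card"
proof (rule ab_index_order_embedding[where f = "\<lambda>c. convex hull c"])
  show "convex hull c \<subseteq> convex hull d \<longleftrightarrow> c \<subseteq> d"
    if "c \<in> antipodal_free" "d \<in> antipodal_free" for c d :: "(real^'n) set"
    using that by (rule convex_hull_subset_iff_antipodal_free)
  show "face_rank (convex hull c) = card c" if "c \<in> antipodal_free" for c :: "(real^'n) set"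
    using that affine_independent_antipodal_free face_rank_convex_hull_affine_independent by blast
  show "(\<lambda>c. convex hull c) ` antipodal_free \<subseteq> face_lattice (cross_polytope :: (real^'n) set)"
    using face_of_cross_polytope_antipodal_free
    by (auto simp: face_lattice_def cross_polytope_eq)
  fix y assume y: "y \<in> face_lattice (cross_polytope :: (real^'n) set)"
    and "face_rank y \<in> {1..CARD('n)}"
  then have "y \<noteq> cross_polytope"
    by (auto simp: face_rank_def aff_dim_cross_polytope)
  then show "y \<in> (\<lambda>c. convex hull c) ` antipodal_free"
    using y face_of_cross_polytope_cases
    by (auto simp: face_lattice_def cross_polytope_eq)
qed

lemma Theta_Psi_cross_polytope:
  "Theta (Psi (cross_polytope :: (real ^ 'n) set)) = qint 2 ^ CARD('n) * qfact CARD('n)"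
proof -
  let ?n = "CARD('n)"
  have "Theta (Psi (cross_polytope :: (real ^ 'n) set))
      = Theta (ab_index ?n (antipodal_free :: (real^'n) set set) card)"
    by (simp add: Psi_def aff_dim_cross_polytope ab_index_face_lattice_cross_polytope)
  also have "\<dots> = (\<Sum>j\<le>?n. of_nat (?n choose j) * 2 ^ j * qfact j * q ^ j * qpoch (Suc j) ?n)"
    by (simp add: Theta_ab_index_down_closed finite_antipodal_free down_closed_antipodal_free
        empty_in_antipodal_free card_antipodal_free)
  also have "\<dots> = (1 + (2 - 1) * q) ^ ?n * qfact ?n"
    by (rule binomial_qfact_sum)
  also have "1 + (2 - 1) * q = qint 2"
    by (simp add: qint_def numeral_2_eq_2 monom_one_eq_q_power)
  finally show ?thesis .
qed

theorem mainTheorem2: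
  shows "Theta (Psi (simplex_poly :: (real ^ 'n) set)) = qfact (CARD('n) + 1) \<and>
         Theta (Psi (cross_polytope :: (real ^ 'n) set)) = qint 2 ^ CARD('n) * qfact CARD('n)"
  using Theta_Psi_simplex_poly Theta_Psi_cross_polytope by simp

end
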